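(* For every $\varepsilon > 0$, there exists a set of squares of total area $\frac{8}{5} + \varepsilon$ that cannot be packed into the unit disk (the disk of radius $1$).
   Context: A packing of a set of squares into a container is a placement of congruent copies of the squares (translations and rotations allowed) inside the container such that the interiors of any two placed squares are disjoint. *)

theory Defs
  imports "HOL-Analysis.Analysis"
begin

definition placed_square :: "real \<Rightarrow> complex \<Rightarrow> real \<Rightarrow> complex set" where
  "placed_square s c \<theta> =
     {c + cis \<theta> * Complex u v | u v. \<bar>u\<bar> \<le> s / 2 \<and> \<bar>v\<bar> \<le> s / 2}"

definition packs_into :: "real list \<Rightarrow> complex set \<Rightarrow> bool" where
  "packs_into ss K \<longleftrightarrow>
     (\<exists>c :: nat \<Rightarrow> complex. \<exists>\<theta> :: nat \<Rightarrow> real.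
        (\<forall>i < length ss. placed_square (ss ! i) (c i) (\<theta> i) \<subseteq> K) \<and>
        (\<forall>i < length ss. \<forall>j < length ss. i \<noteq> j \<longrightarrow>
            interior (placed_square (ss ! i) (c i) (\<theta> i)) \<inter>
            interior (placed_square (ss ! j) (c j) (\<theta> j)) = {}))"

definition total_area :: "real list \<Rightarrow> real" where
  "total_area ss = (\<Sum>s\<leftarrow>ss. s ^ 2)"

end

theory Submission
  imports Defs
begin

text \<open>Two convex bodies with disjoint interiors are separated by a line, so of two squares
  packed into the unit disk one lies in a closed half-disk. A square in a half-disk has area at
  most 4/5: after rotating, the half-disk is Re z \<ge> 0 and the sides of the square make an angle
  of at most pi/4 with the axes. The two corners nearest the diameter then force the midpoint m
  of the opposite side to satisfy Re m \<ge> s, while the two far corners lie in the disk, which by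
  the parallelogram law gives |m|^2 + (s/2)^2 \<le> 1. So two squares of area 4/5 + \<epsilon>/2 do
  not pack.\<close>

lemma convex_bodies_disjoint_interiors_halfspace:
  fixes S T :: "'a::euclidean_space set"
  assumes "convex S" "convex T" "closed S" "closed T"
    and "interior S \<noteq> {}" "interior T \<noteq> {}" "interior S \<inter> interior T = {}"
  shows "\<exists>a. a \<noteq> 0 \<and> (S \<subseteq> {x. 0 \<le> inner a x} \<or> T \<subseteq> {x. 0 \<le> inner a x})"
proof -
  have subset_if_interior_subset: "U \<subseteq> {x. 0 \<le> inner a x}"
    if "convex U" "closed U" "interior U \<noteq> {}" "interior U \<subseteq> {x. 0 \<le> inner a x}" for U and a :: 'a
  proof -
    have "closure (interior U) \<subseteq> {x. 0 \<le> inner a x}"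
      using that(4) closed_halfspace_ge by (rule closure_minimal)
    then show ?thesis
      using convex_closure_interior[OF that(1,3)] closure_closed[OF that(2)] by simp
  qed
  obtain a b where "a \<noteq> 0" and S: "\<forall>x\<in>interior S. inner a x \<le> b" and T: "\<forall>x\<in>interior T. b \<le> inner a x"
    using separating_hyperplane_sets[OF convex_interior convex_interior] assms by blast
  show ?thesis
  proof (cases "0 \<le> b")
    case True
    then have "interior T \<subseteq> {x. 0 \<le> inner a x}" using T by force
    then show ?thesis using subset_if_interior_subset assms \<open>a \<noteq> 0\<close> by blast
  next
    case False
    then have "interior S \<subseteq> {x. 0 \<le> inner (- a) x}" using S by force
    then have "S \<subseteq> {x. 0 \<le> inner (- a) x}" using subset_if_interior_subset assms by blast
    moreover have "- a \<noteq> 0" using \<open>a \<noteq> 0\<close> by simp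
    ultimately show ?thesis by blast
  qed
qed

lemma placed_square_eq_image:
  "placed_square s c \<theta> =
     (\<lambda>z. c + cis \<theta> * z) ` cbox (Complex (- s / 2) (- s / 2)) (Complex (s / 2) (s / 2))"
proof -
  have "z \<in> cbox (Complex (- s / 2) (- s / 2)) (Complex (s / 2) (s / 2)) \<longleftrightarrow>
      \<bar>Re z\<bar> \<le> s / 2 \<and> \<bar>Im z\<bar> \<le> s / 2" for z
    by (auto simp: mem_box Basis_complex_def)
  moreover have "placed_square s c \<theta> = (\<lambda>z. c + cis \<theta> * z) ` {z. \<bar>Re z\<bar> \<le> s / 2 \<and> \<bar>Im z\<bar> \<le> s / 2}"
    unfolding placed_square_def by (force intro: complex_surj[symmetric])
  ultimately show ?thesis by blast
qed

lemma convex_placed_square: "convex (placed_square s c \<theta>)"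
proof -
  have "(\<lambda>z. c + cis \<theta> * z) ` B = (+) c ` ((*) (cis \<theta>) ` B)" for B
    by (simp add: image_image)
  then show ?thesis
    unfolding placed_square_eq_image
    by (simp add: convex_translation convex_linear_image linear_times)
qed

lemma compact_placed_square: "compact (placed_square s c \<theta>)"
  unfolding placed_square_eq_image
  by (intro compact_continuous_image compact_cbox continuous_intros)

lemma ball_subset_placed_square: "ball c (s / 2) \<subseteq> placed_square s c \<theta>"
proof
  fix z assume "z \<in> ball c (s / 2)"
  define w where "w = cnj (cis \<theta>) * (z - c)"
  have "cmod w < s / 2"
    using \<open>z \<in> ball c (s / 2)\<close> by (simp add: w_def norm_mult dist_norm norm_minus_commute)
  then have "\<bar>Re w\<bar> \<le> s / 2" "\<bar>Im w\<bar> \<le> s / 2"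
    using abs_Re_le_cmod abs_Im_le_cmod by (metis less_imp_le order_trans)+
  moreover have "cis \<theta> * cnj (cis \<theta>) = 1"
    by (simp add: cis_cnj cis_mult)
  then have "z = c + cis \<theta> * Complex (Re w) (Im w)"
    unfolding complex_surj w_def mult.assoc[symmetric] by simp
  ultimately show "z \<in> placed_square s c \<theta>"
    unfolding placed_square_def by blast
qed

lemma interior_placed_square_nonempty:
  assumes "s > 0"
  shows "interior (placed_square s c \<theta>) \<noteq> {}"
proof -
  have "c \<in> ball c (s / 2)" using assms by simp
  then show ?thesis using interior_maximal[OF ball_subset_placed_square open_ball] by blast
qed

lemma rotate_placed_square:
  "(*) (cis \<phi>) ` placed_square s c \<theta> = placed_square s (cis \<phi> * c) (\<phi> + \<theta>)"
  unfolding placed_square_eq_image image_image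
  by (simp add: distrib_left mult.assoc[symmetric] cis_mult)

lemma placed_square_quarter_turn: "placed_square s c (\<theta> + pi / 2) = placed_square s c \<theta>"
proof -
  have turn: "cis (\<theta> + pi / 2) * Complex u v = cis \<theta> * Complex (- v) u" for u v
    by (simp add: cis_mult[symmetric] complex_eq_iff)
  show ?thesis
    unfolding placed_square_def
  proof (intro set_eqI iffI)
    fix z assume "z \<in> {c + cis (\<theta> + pi / 2) * Complex u v |u v. \<bar>u\<bar> \<le> s / 2 \<and> \<bar>v\<bar> \<le> s / 2}"
    then obtain u v where "z = c + cis \<theta> * Complex (- v) u" "\<bar>u\<bar> \<le> s / 2" "\<bar>v\<bar> \<le> s / 2"
      by (auto simp: turn)
    then show "z \<in> {c + cis \<theta> * Complex u v |u v. \<bar>u\<bar> \<le> s / 2 \<and> \<bar>v\<bar> \<le> s / 2}"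
      by force
  next
    fix z assume "z \<in> {c + cis \<theta> * Complex u v |u v. \<bar>u\<bar> \<le> s / 2 \<and> \<bar>v\<bar> \<le> s / 2}"
    then obtain u v where "z = c + cis (\<theta> + pi / 2) * Complex v (- u)" "\<bar>u\<bar> \<le> s / 2" "\<bar>v\<bar> \<le> s / 2"
      by (auto simp: turn)
    then show "z \<in> {c + cis (\<theta> + pi / 2) * Complex u v |u v. \<bar>u\<bar> \<le> s / 2 \<and> \<bar>v\<bar> \<le> s / 2}"
      by force
  qed
qed

lemma placed_square_in_right_half_disk_aligned:
  assumes "0 \<le> s" "\<bar>sin \<theta>\<bar> \<le> cos \<theta>"
    and sub: "placed_square s c \<theta> \<subseteq> cball 0 1 \<inter> {z. 0 \<le> Re z}"
  shows "5 * s\<^sup>2 \<le> 4"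
proof -
  define h where "h = s / 2"
  define x y where "x = Re c" "y = Im c"
  define \<alpha> \<beta> where "\<alpha> = cos \<theta>" "\<beta> = sin \<theta>"
  have unit: "\<alpha>\<^sup>2 + \<beta>\<^sup>2 = 1" and aligned: "\<bar>\<beta>\<bar> \<le> \<alpha>"
    using assms(2) by (simp_all add: \<alpha>_\<beta>_def)
  have corner: "0 \<le> x + \<alpha> * u - \<beta> * v \<and> (x + \<alpha> * u - \<beta> * v)\<^sup>2 + (y + \<beta> * u + \<alpha> * v)\<^sup>2 \<le> 1"
    if "\<bar>u\<bar> \<le> h" "\<bar>v\<bar> \<le> h" for u v
  proof -
    define z where "z = c + cis \<theta> * Complex u v"
    have "z \<in> placed_square s c \<theta>"
      using that unfolding placed_square_def z_def h_def by blast
    then have "0 \<le> Re z" "(Re z)\<^sup>2 + (Im z)\<^sup>2 \<le> 1"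
      using sub by (auto simp: cmod_def)
    moreover have "Re z = x + \<alpha> * u - \<beta> * v" "Im z = y + \<beta> * u + \<alpha> * v"
      by (simp_all add: z_def x_y_def \<alpha>_\<beta>_def cis.ctr)
    ultimately show ?thesis by simp
  qed
  have "h \<ge> 0" using \<open>0 \<le> s\<close> by (simp add: h_def)
  \<comment> \<open>parallelogram law for the two far corners, around the midpoint of the far side\<close>
  have "(x + \<alpha> * h - \<beta> * h)\<^sup>2 + (y + \<beta> * h + \<alpha> * h)\<^sup>2 +
        ((x + \<alpha> * h + \<beta> * h)\<^sup>2 + (y + \<beta> * h - \<alpha> * h)\<^sup>2) \<le> 2"
    using corner[of h h] corner[of h "- h"] \<open>h \<ge> 0\<close> by simp
  moreover have "(x + \<alpha> * h - \<beta> * h)\<^sup>2 + (y + \<beta> * h + \<alpha> * h)\<^sup>2 +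
        ((x + \<alpha> * h + \<beta> * h)\<^sup>2 + (y + \<beta> * h - \<alpha> * h)\<^sup>2) =
        2 * ((x + \<alpha> * h)\<^sup>2 + (y + \<beta> * h)\<^sup>2) + 2 * h\<^sup>2 * (\<alpha>\<^sup>2 + \<beta>\<^sup>2)"
    by (simp add: power2_eq_square algebra_simps)
  ultimately have edge_midpoint: "(x + \<alpha> * h)\<^sup>2 + (y + \<beta> * h)\<^sup>2 + h\<^sup>2 \<le> 1"
    using unit by simp
  \<comment> \<open>the near corners lie right of the diameter; as the tilt is at most pi/4, this pushes
    the far side out to x + \<alpha> h \<ge> 2 h\<close>
  have "0 \<le> x - \<alpha> * h - \<beta> * h" "0 \<le> x - \<alpha> * h + \<beta> * h"
    using corner[of "- h" h] corner[of "- h" "- h"] \<open>h \<ge> 0\<close> by simp_all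
  then have "(\<alpha> + \<bar>\<beta>\<bar>) * h \<le> x"
    by (cases "0 \<le> \<beta>") (simp_all add: algebra_simps)
  moreover have "2 \<le> 2 * \<alpha> + \<bar>\<beta>\<bar>"
  proof (rule power2_le_imp_le)
    have "(2 * \<alpha> + \<bar>\<beta>\<bar>)\<^sup>2 - 2\<^sup>2 = \<bar>\<beta>\<bar> * (4 * \<alpha> - 3 * \<bar>\<beta>\<bar>)"
      using unit by (simp add: power2_eq_square algebra_simps abs_mult_self_eq)
    moreover have "0 \<le> \<bar>\<beta>\<bar> * (4 * \<alpha> - 3 * \<bar>\<beta>\<bar>)"
      using aligned by simp
    ultimately show "2\<^sup>2 \<le> (2 * \<alpha> + \<bar>\<beta>\<bar>)\<^sup>2" by simp
  qed (use aligned in simp)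
  ultimately have "2 * h \<le> x + \<alpha> * h"
    using \<open>h \<ge> 0\<close> mult_right_mono[of 2 "2 * \<alpha> + \<bar>\<beta>\<bar>" h] by (simp add: algebra_simps)
  then have "4 * h\<^sup>2 \<le> (x + \<alpha> * h)\<^sup>2"
    using \<open>h \<ge> 0\<close> power_mono[of "2 * h" "x + \<alpha> * h" 2] by (simp add: power_mult_distrib)
  then have "5 * h\<^sup>2 \<le> 1"
    using edge_midpoint zero_le_power2[of "y + \<beta> * h"] by linarith
  then show ?thesis
    by (simp add: h_def power_divide)
qed

lemma placed_square_aligned_angle:
  obtains \<theta>' where "placed_square s c \<theta>' = placed_square s c \<theta>" "\<bar>sin \<theta>'\<bar> \<le> cos \<theta>'"
proof -
  have half_turn: "placed_square s c (\<theta> + pi) = placed_square s c \<theta>"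
    using placed_square_quarter_turn[of s c "\<theta> + pi / 2"] placed_square_quarter_turn[of s c \<theta>]
    by (simp add: add.assoc)
  have back_turn: "placed_square s c (\<theta> - pi / 2) = placed_square s c \<theta>"
    using placed_square_quarter_turn[of s c "\<theta> - pi / 2"] by simp
  consider "\<bar>sin \<theta>\<bar> \<le> cos \<theta>" | "\<bar>cos \<theta>\<bar> \<le> - sin \<theta>" | "\<bar>sin \<theta>\<bar> \<le> - cos \<theta>" | "\<bar>cos \<theta>\<bar> \<le> sin \<theta>"
    by linarith
  then show ?thesis
  proof cases
    case 1
    then show ?thesis using that by blast
  next
    case 2
    then show ?thesis using that[OF placed_square_quarter_turn] by (simp add: sin_add cos_add)
  next
    case 3
    then show ?thesis using that[OF half_turn] by simp
  next
    case 4
    then show ?thesis using that[OF back_turn] by (simp add: sin_diff cos_diff)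
  qed
qed

lemma placed_square_in_right_half_disk:
  assumes "0 \<le> s" "placed_square s c \<theta> \<subseteq> cball 0 1 \<inter> {z. 0 \<le> Re z}"
  shows "5 * s\<^sup>2 \<le> 4"
proof -
  obtain \<theta>' where "placed_square s c \<theta>' = placed_square s c \<theta>" "\<bar>sin \<theta>'\<bar> \<le> cos \<theta>'"
    by (rule placed_square_aligned_angle)
  then show ?thesis
    using placed_square_in_right_half_disk_aligned[of s \<theta>' c] assms by simp
qed

lemma placed_square_in_half_disk:
  fixes a :: complex
  assumes "0 \<le> s" "a \<noteq> 0" and sub: "placed_square s c \<theta> \<subseteq> cball 0 1 \<inter> {z. 0 \<le> inner a z}"
  shows "5 * s\<^sup>2 \<le> 4"
proof (rule placed_square_in_right_half_disk)
  define r where "r = cis (- Arg a)"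
  have "r = cnj a / cmod a"
    using cis_Arg[OF \<open>a \<noteq> 0\<close>] by (simp add: r_def cis_cnj[symmetric] sgn_eq)
  then have "Re (r * z) = inner a z / cmod a" for z
    by (simp add: inner_complex_def)
  moreover have "cmod (r * z) = cmod z" for z
    by (simp add: r_def norm_mult)
  ultimately have "(*) r ` placed_square s c \<theta> \<subseteq> cball 0 1 \<inter> {z. 0 \<le> Re z}"
    using sub by auto
  then show "placed_square s (r * c) (- Arg a + \<theta>) \<subseteq> cball 0 1 \<inter> {z. 0 \<le> Re z}"
    by (simp add: r_def rotate_placed_square)
qed (rule \<open>0 \<le> s\<close>)

lemma not_packs_two_squares_unit_disk:
  assumes "0 < s" "4 < 5 * s\<^sup>2"
  shows "\<not> packs_into [s, s] (cball 0 1)"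
proof
  assume "packs_into [s, s] (cball 0 1)"
  then obtain c \<theta> where
    sub: "\<forall>i < length [s, s]. placed_square ([s, s] ! i) (c i) (\<theta> i) \<subseteq> cball 0 1" and
    disj: "\<forall>i < length [s, s]. \<forall>j < length [s, s]. i \<noteq> j \<longrightarrow>
      interior (placed_square ([s, s] ! i) (c i) (\<theta> i)) \<inter>
      interior (placed_square ([s, s] ! j) (c j) (\<theta> j)) = {}"
    unfolding packs_into_def by blast
  have sub0: "placed_square s (c 0) (\<theta> 0) \<subseteq> cball 0 1"
    and sub1: "placed_square s (c 1) (\<theta> 1) \<subseteq> cball 0 1"
    using sub[rule_format, of 0] sub[rule_format, of 1] by simp_all
  have disj01: "interior (placed_square s (c 0) (\<theta> 0)) \<inter> interior (placed_square s (c 1) (\<theta> 1)) = {}"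
    using disj[rule_format, of 0 1] by simp
  obtain a :: complex where "a \<noteq> 0" and
    "placed_square s (c 0) (\<theta> 0) \<subseteq> {z. 0 \<le> inner a z} \<or>
     placed_square s (c 1) (\<theta> 1) \<subseteq> {z. 0 \<le> inner a z}"
    using convex_bodies_disjoint_interiors_halfspace[OF convex_placed_square convex_placed_square
        compact_imp_closed[OF compact_placed_square] compact_imp_closed[OF compact_placed_square]
        interior_placed_square_nonempty interior_placed_square_nonempty disj01] \<open>0 < s\<close>
    by blast
  then have "5 * s\<^sup>2 \<le> 4"
    using placed_square_in_half_disk[of s a] sub0 sub1 \<open>0 < s\<close> by auto
  with \<open>4 < 5 * s\<^sup>2\<close> show False by simp
qed

theorem lemma2:
  fixes \<epsilon> :: real
  assumes "\<epsilon> > 0"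
  shows "\<exists>ss :: real list. (\<forall>s \<in> set ss. s > 0) \<and>
           total_area ss = 8 / 5 + \<epsilon> \<and> \<not> packs_into ss (cball 0 1)"
proof -
  define s where "s = sqrt (4 / 5 + \<epsilon> / 2)"
  have "0 < s" using assms by (simp add: s_def)
  have "s\<^sup>2 = 4 / 5 + \<epsilon> / 2" using assms by (simp add: s_def)
  then have "total_area [s, s] = 8 / 5 + \<epsilon>" and "4 < 5 * s\<^sup>2"
    using assms by (simp_all add: total_area_def)
  then show ?thesis
    using not_packs_two_squares_unit_disk \<open>0 < s\<close> by (intro exI[of _ "[s, s]"]) auto
qed

end
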